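(* For groupoid terms $p$ and $q$ in a set of variables $X$, the identity $p=q$ is in $\Sigma_{2,4}$ iff $[p]-[q]=\sum_{x\in X}\big(m_x(\alpha+\gamma)+n_x(\beta+1)\big)x$ for some integers $m_x,n_x$.
   Context: $\Sigma_{2,4}$ is the set of groupoid identities satisfied in $\mathbb{Z}$ by both operations $x-y$ and $-x-y$. Let $\mathbf{KL}=\{1,\alpha,\beta,\gamma\}$ be the Klein 4-group ($\alpha^2=\beta^2=1$, $\alpha\beta=\gamma$). For a term $p$ in variables $X$, $[p]$ denotes the element of the free $\mathbb{Z}[\mathbf{KL}]$-module on $X$ obtained by evaluating $p$ with the product $uv$ interpreted as $\alpha u+\beta v$. *)

theory Defs
  imports "HOL-Library.Function_Algebras"
begin

datatype 'v gterm = Var 'v | Op "'v gterm" "'v gterm"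

fun geval :: "(int \<Rightarrow> int \<Rightarrow> int) \<Rightarrow> ('v \<Rightarrow> int) \<Rightarrow> 'v gterm \<Rightarrow> int" where
  "geval f \<rho> (Var x) = \<rho> x"
| "geval f \<rho> (Op u v) = f (geval f \<rho> u) (geval f \<rho> v)"

definition holds_in_Z :: "(int \<Rightarrow> int \<Rightarrow> int) \<Rightarrow> 'v gterm \<Rightarrow> 'v gterm \<Rightarrow> bool" where
  "holds_in_Z f p q \<longleftrightarrow> (\<forall>\<rho>. geval f \<rho> p = geval f \<rho> q)"

definition Sigma24 :: "('v gterm \<times> 'v gterm) set" where
  "Sigma24 = {(p, q). holds_in_Z (\<lambda>x y. x - y) p q \<and> holds_in_Z (\<lambda>x y. - x - y) p q}"

datatype KL = KL1 | KL\<alpha> | KL\<beta> | KL\<gamma>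

fun klmult :: "KL \<Rightarrow> KL \<Rightarrow> KL" where
  "klmult KL1 g = g"
| "klmult g KL1 = g"
| "klmult KL\<alpha> KL\<alpha> = KL1"
| "klmult KL\<beta> KL\<beta> = KL1"
| "klmult KL\<gamma> KL\<gamma> = KL1"
| "klmult KL\<alpha> KL\<beta> = KL\<gamma>"
| "klmult KL\<beta> KL\<alpha> = KL\<gamma>"
| "klmult KL\<alpha> KL\<gamma> = KL\<beta>"
| "klmult KL\<gamma> KL\<alpha> = KL\<beta>"
| "klmult KL\<beta> KL\<gamma> = KL\<alpha>"
| "klmult KL\<gamma> KL\<beta> = KL\<alpha>"

definition KL_elems :: "KL set" where
  "KL_elems = {KL1, KL\<alpha>, KL\<beta>, KL\<gamma>}"

text \<open>Elements of Z[KL] are functions KL => int (coefficient of each group element).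
  Every element of KL is its own inverse, so the convolution product is
  (a*b)(g) = sum_h a(h) b(h g).\<close>
type_synonym ZKL = "KL \<Rightarrow> int"

definition zkl_mult :: "ZKL \<Rightarrow> ZKL \<Rightarrow> ZKL" where
  "zkl_mult a b = (\<lambda>g. \<Sum>h\<in>KL_elems. a h * b (klmult h g))"

definition zkl_of :: "KL \<Rightarrow> ZKL" where
  "zkl_of g = (\<lambda>h. if h = g then 1 else 0)"

text \<open>Free Z[KL]-module on the variables 'v: coefficient functions 'v => Z[KL]
  (elements arising from terms are finitely supported).\<close>
type_synonym 'v ZKLmod = "'v \<Rightarrow> ZKL"

definition mod_smul :: "ZKL \<Rightarrow> 'v ZKLmod \<Rightarrow> 'v ZKLmod" where
  "mod_smul r f = (\<lambda>x. zkl_mult r (f x))"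

definition mod_gen :: "'v \<Rightarrow> 'v ZKLmod" where
  "mod_gen x = (\<lambda>y. if y = x then zkl_of KL1 else (\<lambda>_. 0))"

fun bracket :: "'v gterm \<Rightarrow> 'v ZKLmod" where
  "bracket (Var x) = mod_gen x"
| "bracket (Op u v) = mod_smul (zkl_of KL\<alpha>) (bracket u) + mod_smul (zkl_of KL\<beta>) (bracket v)"

end

theory Submission
  imports Defs
begin

text \<open>For \<open>a, b \<in> {1, -1}\<close> the map \<open>\<alpha> \<mapsto> a, \<beta> \<mapsto> b\<close> is a character of \<open>KL\<close>; its linear
  extension \<open>\<chi>\<^sub>a\<^sub>b\<close> to \<open>\<int>[KL]\<close> is a ring homomorphism. Evaluating a term in \<open>\<int>\<close> under
  \<open>u v = a u + b v\<close> gives \<open>\<Sum>\<^sub>x \<chi>\<^sub>a\<^sub>b([p]\<^sub>x) \<rho>(x)\<close>, so \<open>p = q\<close> holds for this operation iff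
  \<open>\<chi>\<^sub>a\<^sub>b\<close> kills every coefficient of \<open>[p] - [q]\<close>. The operations \<open>x - y\<close> and \<open>-x - y\<close>
  correspond to \<open>(a, b) = (1, -1)\<close> and \<open>(-1, -1)\<close>, and the common kernel of these two
  characters is spanned by \<open>\<alpha> + \<gamma>\<close> and \<open>\<beta> + 1\<close>.\<close>

definition kl_char :: "int \<Rightarrow> int \<Rightarrow> ZKL \<Rightarrow> int" where
  "kl_char a b c = c KL1 + a * c KL\<alpha> + b * c KL\<beta> + a * b * c KL\<gamma>"

lemma sum_KL_elems: "(\<Sum>h\<in>KL_elems. F h) = F KL1 + F KL\<alpha> + F KL\<beta> + F KL\<gamma>"
  by (simp add: KL_elems_def add.assoc)

lemma kl_char_zero: "kl_char a b 0 = 0"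
  by (simp add: kl_char_def)

lemma kl_char_add: "kl_char a b (c + d) = kl_char a b c + kl_char a b d"
  by (simp add: kl_char_def algebra_simps)

lemma kl_char_diff: "kl_char a b (c - d) = kl_char a b c - kl_char a b d"
  by (simp add: kl_char_def algebra_simps)

lemma kl_char_mult:
  assumes "a * a = 1" "b * b = 1"
  shows "kl_char a b (zkl_mult c d) = kl_char a b c * kl_char a b d"
proof -
  from assms have "a = 1 \<or> a = -1" "b = 1 \<or> b = -1"
    by (simp_all add: zmult_eq_1_iff)
  then show ?thesis
    by (elim disjE) (simp_all add: kl_char_def zkl_mult_def sum_KL_elems algebra_simps)
qed

lemma kl_char_zkl_of:
  "kl_char a b (zkl_of KL1) = 1" "kl_char a b (zkl_of KL\<alpha>) = a"
  "kl_char a b (zkl_of KL\<beta>) = b" "kl_char a b (zkl_of KL\<gamma>) = a * b"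
  by (simp_all add: kl_char_def zkl_of_def)

lemma finite_set_gterm: "finite (set_gterm p)"
  by (induction p) auto

lemma bracket_eq_0_if_not_in_set_gterm: "x \<notin> set_gterm p \<Longrightarrow> bracket p x = 0"
  by (induction p) (auto simp: mod_gen_def mod_smul_def zkl_mult_def zero_fun_def)

lemma geval_linear_op:
  assumes f: "\<And>u v. f u v = a * u + b * v" and "a * a = 1" "b * b = 1"
    and S: "finite S" "set_gterm p \<subseteq> S"
  shows "geval f \<rho> p = (\<Sum>x\<in>S. kl_char a b (bracket p x) * \<rho> x)"
  using S(2)
proof (induction p)
  case (Var y)
  have "(\<Sum>x\<in>S. kl_char a b (mod_gen y x) * \<rho> x) = (\<Sum>x\<in>S. if x = y then \<rho> x else 0)"
    by (rule sum.cong) (auto simp: mod_gen_def zkl_of_def kl_char_def)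
  also have "\<dots> = \<rho> y"
    using Var S(1) by simp
  finally show ?case
    by simp
next
  case (Op u v)
  have char_Op: "kl_char a b (bracket (Op u v) x)
      = a * kl_char a b (bracket u x) + b * kl_char a b (bracket v x)" for x
    using assms(2,3) by (simp only: bracket.simps plus_fun_apply mod_smul_def kl_char_add
        kl_char_mult kl_char_zkl_of)
  have "geval f \<rho> (Op u v) = a * geval f \<rho> u + b * geval f \<rho> v"
    by (simp add: f)
  also have "\<dots> = (\<Sum>x\<in>S. (a * kl_char a b (bracket u x) + b * kl_char a b (bracket v x)) * \<rho> x)"
    using Op by (simp add: sum_distrib_left sum.distrib algebra_simps)
  finally show ?case
    by (simp only: char_Op)
qed

lemma sum_mult_eq_0_for_all_iff:
  fixes c :: "'a \<Rightarrow> 'b :: comm_ring_1"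
  assumes "finite S"
  shows "(\<forall>\<rho>. (\<Sum>x\<in>S. c x * \<rho> x) = 0) \<longleftrightarrow> (\<forall>x\<in>S. c x = 0)"
proof (intro iffI ballI)
  fix x
  assume all_zero: "\<forall>\<rho>. (\<Sum>x\<in>S. c x * \<rho> x) = 0" and "x \<in> S"
  have "(\<Sum>y\<in>S. c y * (if y = x then 1 else 0)) = 0"
    by (rule all_zero[THEN spec])
  then show "c x = 0"
    using \<open>x \<in> S\<close> assms by (simp add: if_distrib[of "\<lambda>z. _ * z"] cong: if_cong)
qed simp

lemma holds_in_Z_linear_op_iff:
  assumes "\<And>u v. f u v = a * u + b * v" "a * a = 1" "b * b = 1"
  shows "holds_in_Z f p q \<longleftrightarrow> (\<forall>x. kl_char a b (bracket p x - bracket q x) = 0)"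
proof -
  let ?S = "set_gterm p \<union> set_gterm q"
  have fin: "finite ?S"
    by (simp add: finite_set_gterm)
  have "holds_in_Z f p q
      \<longleftrightarrow> (\<forall>\<rho>. (\<Sum>x\<in>?S. kl_char a b (bracket p x - bracket q x) * \<rho> x) = 0)"
    unfolding holds_in_Z_def
    using geval_linear_op[OF assms fin, of p] geval_linear_op[OF assms fin, of q]
    by (simp add: kl_char_diff left_diff_distrib sum_subtractf)
  also have "\<dots> \<longleftrightarrow> (\<forall>x\<in>?S. kl_char a b (bracket p x - bracket q x) = 0)"
    by (rule sum_mult_eq_0_for_all_iff[OF fin])
  also have "\<dots> \<longleftrightarrow> (\<forall>x. kl_char a b (bracket p x - bracket q x) = 0)"
  proof -
    have "bracket p x - bracket q x = 0" if "x \<notin> ?S" for x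
      using that by (simp add: bracket_eq_0_if_not_in_set_gterm)
    then show ?thesis
      by (metis kl_char_zero)
  qed
  finally show ?thesis .
qed

lemma kl_char_eq_0_iff_in_span:
  "kl_char 1 (-1) d = 0 \<and> kl_char (-1) (-1) d = 0 \<longleftrightarrow>
    (\<exists>m n. d = (\<lambda>g. m * (zkl_of KL\<alpha> g + zkl_of KL\<gamma> g) + n * (zkl_of KL\<beta> g + zkl_of KL1 g)))"
proof
  assume "kl_char 1 (-1) d = 0 \<and> kl_char (-1) (-1) d = 0"
  then have "d KL1 = d KL\<beta>" "d KL\<alpha> = d KL\<gamma>"
    by (auto simp: kl_char_def)
  then have "d = (\<lambda>g. d KL\<alpha> * (zkl_of KL\<alpha> g + zkl_of KL\<gamma> g) + d KL1 * (zkl_of KL\<beta> g + zkl_of KL1 g))"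
    by (intro ext, case_tac g) (auto simp: zkl_of_def)
  then show "\<exists>m n. d = (\<lambda>g. m * (zkl_of KL\<alpha> g + zkl_of KL\<gamma> g) + n * (zkl_of KL\<beta> g + zkl_of KL1 g))"
    by blast
qed (auto simp: kl_char_def zkl_of_def)

theorem lemma3p1:
  fixes p q :: "'v gterm"
  shows "(p, q) \<in> Sigma24 \<longleftrightarrow>
    (\<exists>m n :: 'v \<Rightarrow> int. \<forall>x.
       bracket p x - bracket q x =
         (\<lambda>g. m x * (zkl_of KL\<alpha> g + zkl_of KL\<gamma> g) + n x * (zkl_of KL\<beta> g + zkl_of KL1 g)))"
proof -
  have "(p, q) \<in> Sigma24 \<longleftrightarrow> (\<forall>x. kl_char 1 (-1) (bracket p x - bracket q x) = 0
                                 \<and> kl_char (-1) (-1) (bracket p x - bracket q x) = 0)"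
    using holds_in_Z_linear_op_iff[of "\<lambda>x y. x - y" 1 "-1" p q]
      holds_in_Z_linear_op_iff[of "\<lambda>x y. - x - y" "-1" "-1" p q]
    by (auto simp: Sigma24_def)
  also have "\<dots> \<longleftrightarrow> (\<forall>x. \<exists>m n. bracket p x - bracket q x =
      (\<lambda>g. m * (zkl_of KL\<alpha> g + zkl_of KL\<gamma> g) + n * (zkl_of KL\<beta> g + zkl_of KL1 g)))"
    by (simp only: kl_char_eq_0_iff_in_span)
  finally show ?thesis
    by (simp only: choice_iff)
qed

end
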